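(* Let $M\subset\mathbb{R}^2$ be a smooth regular closed curve, and let $a,b\in M$ be a standard pair of points. Assume $\kappa_M(a)+\kappa_M(b)\neq 0$ and that $$q=\frac{\kappa_M(a)\, a+\kappa_M(b)\, b}{\kappa_M(a)+\kappa_M(b)}$$ is a regular point of $\mathrm{CSS}(M)$. Then the curvature of $\mathrm{CSS}(M)$ at $q$ equals $$\kappa_{\mathrm{CSS}(M)}(q)=\operatorname{sgn}(\kappa_M(b))\cdot\frac{\big(\kappa_M(a)+\kappa_M(b)\big)^3}{\left|\kappa_M^2(b)\kappa_M'(a)-\kappa_M^2(a)\kappa_M'(b)\right|}\cdot\frac{\det\big(a-b,\mathbbm{t}(a)\big)}{|a-b|^3},$$ where $\mathbbm{t}(a)$ is the unit tangent vector to $M$ at $a$ compatible with the orientation of $M$, and $'$ denotes the derivative with respect to arc length.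
   Context: Two distinct points $a,b\in M$ form a parallel pair if the tangent lines to $M$ at $a$ and $b$ are parallel; the line through $a$ and $b$ is then called an affine chord. The Centre Symmetry Set $\mathrm{CSS}(M)$ is the envelope of all affine chords of $M$. For a regular parameterization $f$ of $M$, $M$ is parameterized at opposite directions at $f(s_1),f(s_2)$ if $f'(s_1)=\alpha f'(s_2)$ with $\alpha<0$. A pair $a,b\in M$ is standard if it is a parallel pair, $M$ is parameterized at opposite directions at $a$ and $b$, and $\kappa_M(b)\neq 0$, where $\kappa_M$ is the signed curvature. For a standard pair, let $f(s)$, $g(t)$ be local arc-length parameterizations of $M$ near $a$ and $b$; there is a smooth function $t(s)$ with $f'(s)=-g'(t(s))$ (and $t'(s)=\kappa_f(s)/\kappa_g(t(s))$). Away from double tangents, $\mathrm{CSS}(M)$ is locally parameterized (natural parameterization) by $\gamma(s)=\dfrac{\kappa_f(s)f(s)+\kappa_g(t(s))g(t(s))}{\kappa_f(s)+\kappa_g(t(s))}$ wherever the denominator is nonzero; regular/singular points and curvature of $\mathrm{CSS}(M)$ refer to this parameterization. *)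

theory Defs
  imports "HOL-Analysis.Analysis"
begin

definition smooth_on :: "real set \<Rightarrow> (real \<Rightarrow> 'a::real_normed_vector) \<Rightarrow> bool" where
  "smooth_on S f \<longleftrightarrow>
     (\<exists>D. D 0 = f \<and> (\<forall>n. \<forall>s\<in>S. (D n has_vector_derivative D (Suc n) s) (at s)))"

definition vel :: "(real \<Rightarrow> real^2) \<Rightarrow> real \<Rightarrow> real^2" where
  "vel p s = vector_derivative p (at s)"

definition acc :: "(real \<Rightarrow> real^2) \<Rightarrow> real \<Rightarrow> real^2" where
  "acc p s = vector_derivative (vel p) (at s)"

definition det2 :: "real^2 \<Rightarrow> real^2 \<Rightarrow> real" where
  "det2 u v = u$1 * v$2 - u$2 * v$1"

definition signed_curvature :: "(real \<Rightarrow> real^2) \<Rightarrow> real \<Rightarrow> real" where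
  "signed_curvature p s = det2 (vel p s) (acc p s) / norm (vel p s) ^ 3"

text \<open>Smooth regular closed curve given by a unit-speed (arc-length), L-periodic
  parameterization c; M = range c, oriented by c.\<close>
definition arclength_closed_curve :: "(real \<Rightarrow> real^2) \<Rightarrow> real \<Rightarrow> bool" where
  "arclength_closed_curve c L \<longleftrightarrow>
     L > 0 \<and> smooth_on UNIV c \<and> (\<forall>s. c (s + L) = c s) \<and> (\<forall>s. norm (vel c s) = 1)"

text \<open>Natural parameterization of CSS(M) near a standard pair, given the
  correspondence function tau (the paper's t(s)).\<close>
definition css_param :: "(real \<Rightarrow> real^2) \<Rightarrow> (real \<Rightarrow> real) \<Rightarrow> real \<Rightarrow> real^2" where
  "css_param c \<tau> s =
     (1 / (signed_curvature c s + signed_curvature c (\<tau> s))) *\<^sub>R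
       (signed_curvature c s *\<^sub>R c s + signed_curvature c (\<tau> s) *\<^sub>R c (\<tau> s))"

end

theory Submission
  imports Defs
begin

text \<open>Differentiating \<open>c' = - c' \<circ> \<tau>\<close> gives \<open>\<kappa> = \<tau>' (\<kappa> \<circ> \<tau>)\<close>. Writing the CSS as
  \<open>\<gamma> = c \<circ> \<tau> + w (c - c \<circ> \<tau>)\<close> with \<open>w = \<kappa> / (\<kappa> + \<kappa> \<circ> \<tau>)\<close>, this relation makes the
  tangential terms cancel, so \<open>\<gamma>' = w' (c - c \<circ> \<tau>)\<close>: the CSS is tangent to the affine chord.
  Hence \<open>\<gamma>'' = w'' (c - c \<circ> \<tau>) + w' (1 + \<tau>') c'\<close> and
  \<open>\<kappa>\<^sub>\<gamma> = (1 + \<tau>') det(c - c \<circ> \<tau>, c') / (|w'| |c - c \<circ> \<tau>|\<^sup>3)\<close>; substituting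
  \<open>\<tau>' = \<kappa>(a) / \<kappa>(b)\<close> into \<open>1 + \<tau>'\<close> and \<open>w'\<close> yields the formula.\<close>

lemma smooth_on_has_vector_derivative:
  assumes "smooth_on S f" and "s \<in> S"
  shows "(f has_vector_derivative vector_derivative f (at s)) (at s)"
proof -
  obtain D where "D 0 = f" and "\<And>n s. s \<in> S \<Longrightarrow> (D n has_vector_derivative D (Suc n) s) (at s)"
    using assms(1) unfolding smooth_on_def by blast
  then have "f differentiable (at s)"
    using assms(2) by (metis differentiableI_vector)
  then show ?thesis
    by (rule vector_derivative_works[THEN iffD1])
qed

lemma smooth_on_vector_derivative:
  assumes "open S" and "smooth_on S f"
  shows "smooth_on S (\<lambda>s. vector_derivative f (at s))"
proof -
  obtain D where D0: "D 0 = f" and D: "\<And>n s. s \<in> S \<Longrightarrow> (D n has_vector_derivative D (Suc n) s) (at s)"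
    using assms(2) unfolding smooth_on_def by blast
  have D1: "vector_derivative f (at s) = D 1 s" if "s \<in> S" for s
    using D[OF that, of 0] D0 vector_derivative_at by fastforce
  define D' where "D' = (D \<circ> Suc)(0 := (\<lambda>s. vector_derivative f (at s)))"
  have "(D' n has_vector_derivative D' (Suc n) s) (at s)" if "s \<in> S" for n s
  proof (cases n)
    case 0
    have "(D 1 has_vector_derivative D 2 s) (at s)"
      using D[OF that, of 1] by (simp add: numeral_2_eq_2)
    then show ?thesis
      using 0 D1 by (auto simp: D'_def numeral_2_eq_2
          intro: has_vector_derivative_transform_within_open[OF _ assms(1) that])
  next
    case (Suc m)
    then show ?thesis using D[OF that] by (simp add: D'_def)
  qed
  then show ?thesis
    unfolding smooth_on_def by (metis D'_def fun_upd_same)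
qed

lemma det2_self [simp]: "det2 u u = 0"
  and det2_minus_left [simp]: "det2 (- u) v = - det2 u v"
  and det2_minus_right [simp]: "det2 u (- v) = - det2 u v"
  and det2_scaleR_left [simp]: "det2 (a *\<^sub>R u) v = a * det2 u v"
  and det2_scaleR_right [simp]: "det2 u (a *\<^sub>R v) = a * det2 u v"
  and det2_add_right [simp]: "det2 u (v + w) = det2 u v + det2 u w"
  by (simp_all add: det2_def algebra_simps)

lemma has_real_derivative_det2:
  assumes "(u has_vector_derivative u') (at x within S)" and "(v has_vector_derivative v') (at x within S)"
  shows "((\<lambda>s. det2 (u s) (v s)) has_real_derivative det2 u' (v x) + det2 (u x) v') (at x within S)"
proof -
  have nth: "((\<lambda>s. w s $ i) has_real_derivative w' $ i) (at x within S)"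
    if "(w has_vector_derivative w') (at x within S)" for w :: "real \<Rightarrow> real^2" and w' i
    using bounded_linear.has_vector_derivative[OF bounded_linear_vec_nth that, of i]
    by (simp add: has_real_derivative_iff_has_vector_derivative)
  show ?thesis
    unfolding det2_def
    by (auto intro!: derivative_eq_intros nth assms simp: algebra_simps)
qed

lemma signed_curvature_unit_speed:
  "norm (vel p s) = 1 \<Longrightarrow> signed_curvature p s = det2 (vel p s) (acc p s)"
  by (simp add: signed_curvature_def)

lemma smooth_curve_has_vel:
  "smooth_on UNIV c \<Longrightarrow> (c has_vector_derivative vel c s) (at s)"
  unfolding vel_def by (rule smooth_on_has_vector_derivative) auto

lemma smooth_on_vel: "smooth_on UNIV c \<Longrightarrow> smooth_on UNIV (vel c)"
  using smooth_on_vector_derivative[of UNIV c] by (simp add: vel_def[abs_def])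

lemma smooth_curve_has_acc:
  "smooth_on UNIV c \<Longrightarrow> (vel c has_vector_derivative acc c s) (at s)"
  unfolding acc_def by (rule smooth_on_has_vector_derivative[OF smooth_on_vel]) auto

lemma smooth_on_acc: "smooth_on UNIV c \<Longrightarrow> smooth_on UNIV (acc c)"
  using smooth_on_vector_derivative[of UNIV "vel c"] smooth_on_vel by (simp add: acc_def[abs_def])

lemma unit_speed_curvature_differentiable:
  assumes smooth: "smooth_on UNIV c" and unit: "\<And>s. norm (vel c s) = 1"
  shows "signed_curvature c differentiable (at s)"
    and "deriv (signed_curvature c) differentiable (at s)"
proof -
  define j where "j s = vector_derivative (acc c) (at s)" for s
  have smooth_j: "smooth_on UNIV j"
    unfolding j_def[abs_def] by (rule smooth_on_vector_derivative[OF _ smooth_on_acc[OF smooth]]) simp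
  have acc': "(acc c has_vector_derivative j s) (at s)" for s
    unfolding j_def by (rule smooth_on_has_vector_derivative[OF smooth_on_acc[OF smooth]]) simp
  have j': "(j has_vector_derivative vector_derivative j (at s)) (at s)" for s
    by (rule smooth_on_has_vector_derivative[OF smooth_j]) simp
  have \<kappa>: "signed_curvature c = (\<lambda>s. det2 (vel c s) (acc c s))"
    using unit by (simp add: signed_curvature_unit_speed fun_eq_iff)
  have \<kappa>': "(signed_curvature c has_real_derivative det2 (vel c s) (j s)) (at s)" for s
    using has_real_derivative_det2[OF smooth_curve_has_acc[OF smooth] acc'] by (simp add: \<kappa>)
  then show "signed_curvature c differentiable (at s)"
    using real_differentiable_def by blast
  have "deriv (signed_curvature c) = (\<lambda>s. det2 (vel c s) (j s))"
    using \<kappa>' DERIV_imp_deriv by blast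
  then show "deriv (signed_curvature c) differentiable (at s)"
    using has_real_derivative_det2[OF smooth_curve_has_acc[OF smooth] j'] real_differentiable_def
    by metis
qed

lemma signed_curvature_correspondence:
  assumes "open S" and "s \<in> S" and corr: "\<forall>x\<in>S. vel c x = - vel c (\<tau> x)"
    and \<tau>: "(\<tau> has_real_derivative \<mu>) (at s)"
    and acc_s: "(vel c has_vector_derivative acc c s) (at s)"
    and acc_\<tau>: "(vel c has_vector_derivative acc c (\<tau> s)) (at (\<tau> s))"
  shows "signed_curvature c s = \<mu> * signed_curvature c (\<tau> s)"
proof -
  have "((\<lambda>x. - vel c (\<tau> x)) has_vector_derivative - (\<mu> *\<^sub>R acc c (\<tau> s))) (at s)"
    using vector_diff_chain_at[OF \<tau>[unfolded has_real_derivative_iff_has_vector_derivative] acc_\<tau>]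
    by (auto intro!: derivative_eq_intros simp: o_def)
  then have "(vel c has_vector_derivative - (\<mu> *\<^sub>R acc c (\<tau> s))) (at s)"
    using corr by (auto intro: has_vector_derivative_transform_within_open[OF _ assms(1,2)])
  then have "acc c s = - (\<mu> *\<^sub>R acc c (\<tau> s))"
    using acc_s vector_derivative_unique_at by blast
  then show ?thesis
    using corr assms(2) by (simp add: signed_curvature_def)
qed

lemma signed_curvature_vel_parallel:
  assumes "open S" and "s \<in> S" and vel: "\<And>x. x \<in> S \<Longrightarrow> vel p x = l x *\<^sub>R d x"
    and l: "l differentiable (at s)" and d: "(d has_vector_derivative d') (at s)"
  shows "signed_curvature p s = det2 (d s) d' / (\<bar>l s\<bar> * norm (d s) ^ 3)"
proof -
  have "((\<lambda>x. l x *\<^sub>R d x) has_vector_derivative l s *\<^sub>R d' + deriv l s *\<^sub>R d s) (at s)"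
    using l by (auto intro!: derivative_eq_intros d simp: DERIV_deriv_iff_real_differentiable)
  then have "(vel p has_vector_derivative l s *\<^sub>R d' + deriv l s *\<^sub>R d s) (at s)"
    using vel by (auto intro: has_vector_derivative_transform_within_open[OF _ assms(1,2)])
  then have "acc p s = l s *\<^sub>R d' + deriv l s *\<^sub>R d s"
    by (simp add: acc_def vector_derivative_at)
  then have "signed_curvature p s = (l s)\<^sup>2 * det2 (d s) d' / (\<bar>l s\<bar> * norm (d s)) ^ 3"
    by (simp add: signed_curvature_def vel[OF assms(2)] power2_eq_square)
  also have "\<dots> = det2 (d s) d' / (\<bar>l s\<bar> * norm (d s) ^ 3)"
  proof (cases "l s = 0")
    case False
    have "(\<bar>l s\<bar> * norm (d s)) ^ 3 = (l s)\<^sup>2 * (\<bar>l s\<bar> * norm (d s) ^ 3)"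
      by (simp add: power_mult_distrib power3_eq_cube power2_eq_square)
    then show ?thesis
      using False by simp
  qed simp
  finally show ?thesis .
qed

lemma has_vector_derivative_weighted_mean:
  fixes f g :: "real \<Rightarrow> 'a::real_normed_vector"
  assumes f: "(f has_vector_derivative f') (at s)"
    and g: "(g has_vector_derivative - (\<mu> *\<^sub>R f')) (at s)"
    and k1: "(k1 has_real_derivative k1') (at s)"
    and k2: "(k2 has_real_derivative k2') (at s)"
    and nonzero: "k1 s + k2 s \<noteq> 0"
    and weights: "k1 s = \<mu> * k2 s"
  shows "((\<lambda>x. (1 / (k1 x + k2 x)) *\<^sub>R (k1 x *\<^sub>R f x + k2 x *\<^sub>R g x)) has_vector_derivative
           ((k1' * k2 s - k1 s * k2') / (k1 s + k2 s)\<^sup>2) *\<^sub>R (f s - g s)) (at s)"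
proof -
  define \<sigma> where "\<sigma> = k1 s + k2 s"
  define w' where "w' = (k1' * k2 s - k1 s * k2') / \<sigma>\<^sup>2"
  have "((\<lambda>x. (1 / (k1 x + k2 x)) *\<^sub>R (k1 x *\<^sub>R f x + k2 x *\<^sub>R g x)) has_vector_derivative
     (1 / \<sigma>) *\<^sub>R (k1 s *\<^sub>R f' + k1' *\<^sub>R f s + (k2 s *\<^sub>R - (\<mu> *\<^sub>R f') + k2' *\<^sub>R g s))
     + ((- k1' - k2') / \<sigma>\<^sup>2) *\<^sub>R (k1 s *\<^sub>R f s + k2 s *\<^sub>R g s)) (at s)"
    using nonzero unfolding \<sigma>_def
    by (auto intro!: derivative_eq_intros f g k1 k2 simp: power2_eq_square)
  moreover have "k1 s *\<^sub>R f' + k2 s *\<^sub>R - (\<mu> *\<^sub>R f') = 0"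
    using weights by (simp add: algebra_simps)
  then have "(1 / \<sigma>) *\<^sub>R (k1 s *\<^sub>R f' + k1' *\<^sub>R f s + (k2 s *\<^sub>R - (\<mu> *\<^sub>R f') + k2' *\<^sub>R g s))
     + ((- k1' - k2') / \<sigma>\<^sup>2) *\<^sub>R (k1 s *\<^sub>R f s + k2 s *\<^sub>R g s)
     = (k1' / \<sigma> - (k1' + k2') * k1 s / \<sigma>\<^sup>2) *\<^sub>R f s + (k2' / \<sigma> - (k1' + k2') * k2 s / \<sigma>\<^sup>2) *\<^sub>R g s"
    by (simp add: weights algebra_simps diff_divide_distrib add_divide_distrib)
  moreover have "k1' / \<sigma> - (k1' + k2') * k1 s / \<sigma>\<^sup>2 = w'" "k2' / \<sigma> - (k1' + k2') * k2 s / \<sigma>\<^sup>2 = - w'"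
    using nonzero unfolding atomize_conj w'_def
    by (simp add: \<sigma>_def[symmetric] field_simps power2_eq_square) (simp add: \<sigma>_def algebra_simps)
  ultimately show ?thesis
    by (simp add: w'_def \<sigma>_def scaleR_diff_right)
qed

text \<open>The derivative \<open>w'\<close> of the weight \<open>w = \<kappa> / (\<kappa> + \<kappa> \<circ> \<tau>)\<close> in
  \<open>css_param c \<tau> = c \<circ> \<tau> + w (c - c \<circ> \<tau>)\<close>.\<close>
definition css_weight_deriv :: "(real \<Rightarrow> real^2) \<Rightarrow> (real \<Rightarrow> real) \<Rightarrow> real \<Rightarrow> real" where
  "css_weight_deriv c \<tau> s =
     (deriv (signed_curvature c) s * signed_curvature c (\<tau> s)
      - signed_curvature c s * (deriv (signed_curvature c) (\<tau> s) * deriv \<tau> s))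
     / (signed_curvature c s + signed_curvature c (\<tau> s))\<^sup>2"

lemma css_param_has_vector_derivative:
  assumes c: "\<And>t. (c has_vector_derivative vel c t) (at t)"
    and acc: "\<And>t. (vel c has_vector_derivative acc c t) (at t)"
    and \<kappa>: "\<And>t. signed_curvature c differentiable (at t)"
    and "open S" and corr: "\<forall>x\<in>S. vel c x = - vel c (\<tau> x)"
    and \<tau>: "\<And>x. x \<in> S \<Longrightarrow> \<tau> differentiable (at x)"
    and s: "s \<in> S" and nonzero: "signed_curvature c s + signed_curvature c (\<tau> s) \<noteq> 0"
  shows "(css_param c \<tau> has_vector_derivative css_weight_deriv c \<tau> s *\<^sub>R (c s - c (\<tau> s))) (at s)"
proof -
  have \<tau>': "(\<tau> has_real_derivative deriv \<tau> s) (at s)"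
    using \<tau>[OF s] DERIV_deriv_iff_real_differentiable by blast
  have \<kappa>': "(signed_curvature c has_real_derivative deriv (signed_curvature c) t) (at t)" for t
    using \<kappa> DERIV_deriv_iff_real_differentiable by blast
  have "((\<lambda>x. c (\<tau> x)) has_vector_derivative deriv \<tau> s *\<^sub>R vel c (\<tau> s)) (at s)"
    using vector_diff_chain_at[OF \<tau>'[unfolded has_real_derivative_iff_has_vector_derivative] c]
    by (simp add: o_def)
  then have c\<tau>: "((\<lambda>x. c (\<tau> x)) has_vector_derivative - (deriv \<tau> s *\<^sub>R vel c s)) (at s)"
    using corr s by simp
  have \<kappa>\<tau>: "((\<lambda>x. signed_curvature c (\<tau> x)) has_real_derivative
      deriv (signed_curvature c) (\<tau> s) * deriv \<tau> s) (at s)"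
    using DERIV_chain2[OF \<kappa>' \<tau>'] .
  have "signed_curvature c s = deriv \<tau> s * signed_curvature c (\<tau> s)"
    using signed_curvature_correspondence[OF \<open>open S\<close> s corr \<tau>' acc acc] .
  from has_vector_derivative_weighted_mean[OF c c\<tau> \<kappa>' \<kappa>\<tau> nonzero this]
  show ?thesis
    by (simp add: css_param_def[abs_def] css_weight_deriv_def)
qed

lemma signed_curvature_css_param:
  assumes c: "\<And>t. (c has_vector_derivative vel c t) (at t)"
    and acc: "\<And>t. (vel c has_vector_derivative acc c t) (at t)"
    and \<kappa>: "\<And>t. signed_curvature c differentiable (at t)"
    and \<kappa>': "\<And>t. deriv (signed_curvature c) differentiable (at t)"
    and "open S" and corr: "\<forall>x\<in>S. vel c x = - vel c (\<tau> x)"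
    and \<tau>: "\<And>x. x \<in> S \<Longrightarrow> \<tau> differentiable (at x)"
    and s0: "s0 \<in> S" and \<tau>': "deriv \<tau> differentiable (at s0)"
    and nonzero: "signed_curvature c s0 + signed_curvature c (\<tau> s0) \<noteq> 0"
  shows "signed_curvature (css_param c \<tau>) s0 =
    (1 + deriv \<tau> s0) * det2 (c s0 - c (\<tau> s0)) (vel c s0)
      / (\<bar>css_weight_deriv c \<tau> s0\<bar> * norm (c s0 - c (\<tau> s0)) ^ 3)"
proof -
  have \<kappa>\<tau>: "(\<lambda>x. signed_curvature c (\<tau> x)) differentiable (at s0)"
    and \<kappa>'\<tau>: "(\<lambda>x. deriv (signed_curvature c) (\<tau> x)) differentiable (at s0)"
    using \<tau>[OF s0] \<kappa> \<kappa>' by (auto intro: differentiable_compose)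
  have "isCont (\<lambda>x. signed_curvature c x + signed_curvature c (\<tau> x)) s0"
    using \<kappa> \<kappa>\<tau> by (intro continuous_intros) (auto intro: differentiable_imp_continuous_within)
  from continuous_at_avoid[OF this nonzero] obtain \<epsilon> where "\<epsilon> > 0"
    and \<sigma>: "\<And>x. dist s0 x < \<epsilon> \<Longrightarrow> signed_curvature c x + signed_curvature c (\<tau> x) \<noteq> 0"
    by blast
  define T where "T = S \<inter> ball s0 \<epsilon>"
  have T: "open T" "s0 \<in> T"
    using \<open>open S\<close> s0 \<open>\<epsilon> > 0\<close> by (auto simp: T_def)
  have "vel (css_param c \<tau>) x = css_weight_deriv c \<tau> x *\<^sub>R (c x - c (\<tau> x))" if "x \<in> T" for x
    using css_param_has_vector_derivative[OF c acc \<kappa> \<open>open T\<close> _ \<tau> that \<sigma>] corr that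
    by (auto simp: T_def vel_def vector_derivative_at)
  moreover have "css_weight_deriv c \<tau> differentiable (at s0)"
    unfolding css_weight_deriv_def[abs_def]
    using \<kappa> \<kappa>' \<kappa>\<tau> \<kappa>'\<tau> \<tau>' \<sigma>[of s0] \<open>\<epsilon> > 0\<close>
    by (auto intro!: derivative_intros)
  moreover have "((\<lambda>x. c x - c (\<tau> x)) has_vector_derivative (1 + deriv \<tau> s0) *\<^sub>R vel c s0) (at s0)"
  proof -
    have "(\<tau> has_vector_derivative deriv \<tau> s0) (at s0)"
      using \<tau>[OF s0] DERIV_deriv_iff_real_differentiable has_real_derivative_iff_has_vector_derivative by blast
    then have "((\<lambda>x. c x - c (\<tau> x)) has_vector_derivative vel c s0 - deriv \<tau> s0 *\<^sub>R vel c (\<tau> s0)) (at s0)"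
      using vector_diff_chain_at[OF _ c] by (auto intro!: derivative_eq_intros c simp: o_def)
    then show ?thesis
      using corr s0 by (simp add: algebra_simps)
  qed
  ultimately show ?thesis
    by (simp add: signed_curvature_vel_parallel[OF T] mult.commute)
qed

lemma css_curvature_factor:
  fixes k1 k2 a b \<mu> :: real
  assumes k2: "k2 \<noteq> 0" and "k1 + k2 \<noteq> 0" and "k1 = \<mu> * k2"
  shows "(1 + \<mu>) / \<bar>(a * k2 - k1 * (b * \<mu>)) / (k1 + k2)\<^sup>2\<bar>
    = sgn k2 * ((k1 + k2) ^ 3 / \<bar>k2\<^sup>2 * a - k1\<^sup>2 * b\<bar>)"
proof -
  define N where "N = k2\<^sup>2 * a - k1\<^sup>2 * b"
  have \<mu>: "\<mu> = k1 / k2"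
    using assms(1,3) by simp
  have "a * k2 - k1 * (b * \<mu>) = N / k2" and "1 + \<mu> = (k1 + k2) / k2"
    using k2 by (simp_all add: N_def \<mu> field_simps power2_eq_square)
  then have "(1 + \<mu>) / \<bar>(a * k2 - k1 * (b * \<mu>)) / (k1 + k2)\<^sup>2\<bar>
      = (k1 + k2) / k2 / (\<bar>N\<bar> / (\<bar>k2\<bar> * (k1 + k2)\<^sup>2))"
    by (simp add: abs_divide abs_mult)
  also have "\<dots> = \<bar>k2\<bar> / k2 * ((k1 + k2) ^ 3 / \<bar>N\<bar>)"
    using assms(1,2) by (cases "N = 0") (simp_all add: field_simps power2_eq_square power3_eq_cube)
  finally show ?thesis
    using k2 by (simp add: N_def abs_if sgn_if)
qed

theorem proposition2p11:
  fixes c :: "real \<Rightarrow> real^2" and L s0 t0 :: real and \<tau> :: "real \<Rightarrow> real" and e :: real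
  assumes curve: "arclength_closed_curve c L"
    and distinct: "c s0 \<noteq> c t0"
    and opposite: "\<exists>\<alpha><0. vel c s0 = \<alpha> *\<^sub>R vel c t0"
    and kb: "signed_curvature c t0 \<noteq> 0"
    and ksum: "signed_curvature c s0 + signed_curvature c t0 \<noteq> 0"
    and e: "e > 0"
    and tau_smooth: "smooth_on (ball s0 e) \<tau>"
    and tau_s0: "\<tau> s0 = t0"
    and tau_corr: "\<forall>s\<in>ball s0 e. vel c s = - vel c (\<tau> s)"
    and regular: "vel (css_param c \<tau>) s0 \<noteq> 0"
  shows "signed_curvature (css_param c \<tau>) s0 =
     sgn (signed_curvature c t0) *
     ((signed_curvature c s0 + signed_curvature c t0) ^ 3 /
       \<bar>(signed_curvature c t0)\<^sup>2 * deriv (signed_curvature c) s0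
        - (signed_curvature c s0)\<^sup>2 * deriv (signed_curvature c) t0\<bar>) *
     (det2 (c s0 - c t0) (vel c s0) / norm (c s0 - c t0) ^ 3)"
proof -
  have smooth: "smooth_on UNIV c" and unit: "\<And>s. norm (vel c s) = 1"
    using curve by (auto simp: arclength_closed_curve_def)
  have s0: "s0 \<in> ball s0 e"
    using e by simp
  have \<tau>: "\<tau> differentiable (at x)" if "x \<in> ball s0 e" for x
    using smooth_on_has_vector_derivative[OF tau_smooth that] differentiableI_vector by blast
  have "smooth_on (ball s0 e) (deriv \<tau>)"
    using smooth_on_vector_derivative[OF open_ball tau_smooth]
    by (simp add: field_derivative_eq_vector_derivative[abs_def])
  then have \<tau>': "deriv \<tau> differentiable (at s0)"
    using smooth_on_has_vector_derivative s0 differentiableI_vector by blast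
  have "signed_curvature c s0 = deriv \<tau> s0 * signed_curvature c t0"
    using signed_curvature_correspondence[OF open_ball s0 tau_corr _ smooth_curve_has_acc smooth_curve_has_acc]
      \<tau>[OF s0] smooth tau_s0 DERIV_deriv_iff_real_differentiable by blast
  then have "(1 + deriv \<tau> s0) / \<bar>css_weight_deriv c \<tau> s0\<bar> =
      sgn (signed_curvature c t0) *
       ((signed_curvature c s0 + signed_curvature c t0) ^ 3 /
         \<bar>(signed_curvature c t0)\<^sup>2 * deriv (signed_curvature c) s0
          - (signed_curvature c s0)\<^sup>2 * deriv (signed_curvature c) t0\<bar>)"
    using css_curvature_factor kb ksum by (simp add: css_weight_deriv_def tau_s0)
  moreover have "signed_curvature (css_param c \<tau>) s0 =
      (1 + deriv \<tau> s0) / \<bar>css_weight_deriv c \<tau> s0\<bar> * (det2 (c s0 - c t0) (vel c s0) / norm (c s0 - c t0) ^ 3)"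
    using signed_curvature_css_param[OF smooth_curve_has_vel smooth_curve_has_acc
        unit_speed_curvature_differentiable open_ball tau_corr \<tau> s0 \<tau>'] smooth unit ksum
    by (simp add: tau_s0)
  ultimately show ?thesis
    by simp
qed

end
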